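(* Let $d,w \ge 1$ be integers and let $h_1,\dots,h_d$ be fixed functions from the item universe $\mathcal{U}$ to $\{1,\dots,w\}$. Let $\sigma_1$ and $\sigma_2$ be two finite streams of occurrences of items of $\mathcal{U}$, each occurrence carrying a positive real (decayed) weight, and let $\sigma=\sigma_1\sigma_2$ be their concatenation. For a stream $\tau$ and a cell $(i,j)$ with $1\le i\le d$, $1\le j\le w$, let $\tau^{(i,j)}$ be the sub-stream of occurrences of items $e$ with $h_i(e)=j$, let $f_{\tau^{(i,j)}}(e)$ be the sum of the weights of the occurrences of $e$ in $\tau^{(i,j)}$, and let $|\tau^{(i,j)}|=\sum_e f_{\tau^{(i,j)}}(e)$ be its total decayed count. Call a two-counter summary $\mathcal{S}=(\Sigma,\hat f_{\mathcal{S}})$ (a set $\Sigma$ of at most $2$ monitored items with estimates $\hat f_{\mathcal{S}}(e)>0$, $e\in\Sigma$; let $\hat f^{min}_{\mathcal{S}}=\min_{e\in\Sigma}\hat f_{\mathcal{S}}(e)$ if $|\Sigma|=2$ and $\hat f^{min}_{\mathcal{S}}=0$ if $|\Sigma|<2$; let $|\mathcal{S}|=\sum_{e\in\Sigma}\hat f_{\mathcal{S}}(e)$) \emph{valid} for a weighted stream $\tau$ with decayed frequencies $f_\tau$ if: (i) $|\mathcal{S}|=|\tau|$; (ii) $\hat f_{\mathcal{S}}(e)-\hat f^{min}_{\mathcal{S}}\le f_\tau(e)\le \hat f_{\mathcal{S}}(e)$ for every $e\in\Sigma$; (iii) $f_\tau(e)\le \hat f^{min}_{\mathcal{S}}$ for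 every item $e\notin\Sigma$; (iv) $\hat f^{min}_{\mathcal{S}}\le |\tau|/2$. Suppose $D_1$ and $D_2$ are $d\times w$ sketches such that, for every cell $(i,j)$, $D_1[i][j]=\mathcal{S}_1=(\Sigma_1,\hat f_{\mathcal{S}_1})$ is a two-counter summary valid for $\sigma_1^{(i,j)}$ and $D_2[i][j]=\mathcal{S}_2=(\Sigma_2,\hat f_{\mathcal{S}_2})$ is a two-counter summary valid for $\sigma_2^{(i,j)}$. Define the merged sketch $G$ cell by cell as follows: form the combined summary $\mathcal{S}_C$ on $\Sigma_C=\Sigma_1\cup\Sigma_2$ by $\hat f_{\mathcal{S}_C}(e)=\hat f_{\mathcal{S}_1}(e)+\hat f_{\mathcal{S}_2}(e)$ for $e\in\Sigma_1\cap\Sigma_2$, $\hat f_{\mathcal{S}_C}(e)=\hat f_{\mathcal{S}_1}(e)+\hat f^{min}_{\mathcal{S}_2}$ for $e\in\Sigma_1\setminus\Sigma_2$, $\hat f_{\mathcal{S}_C}(e)=\hat f_{\mathcal{S}_2}(e)+\hat f^{min}_{\mathcal{S}_1}$ for $e\in\Sigma_2\setminus\Sigma_1$; then, if $|\Sigma_C|>2$, let $G[i][j]=\mathcal{S}_M$ retain only the $2$ items of $\Sigma_C$ with the greatest values of $\hat f_{\mathcal{S}_C}$ (with those values), and otherwise let $G[i][j]=\mathcal{S}_M=\mathcal{S}_C$. Then for every cell $(i,j)$, the merged summary $G[i][j]$ is a two-counter summary valid for $\sigma^{(i,j)}$; in particular the sum of its counters equals the total decayed count $|\sigma^{(i,j)}|=|\sigma_1^{(i,j)}|+|\sigma_2^{(i,j)}|$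 of the items of $\sigma$ mapped to that cell.
   Context: This is the merge operation of PFDCMSS, a parallel algorithm for time-faded heavy hitters. Each stream occurrence of an item $v$ with timestamp $t_v$ carries a (non-normalized forward) decayed weight $g(t_v-L)$ for a positive monotone non-decreasing function $g$ and landmark time $L$; only positivity of the weights matters here. An FDCMSS sketch is a $d\times w$ array, each cell of which holds a Space Saving summary with exactly two counters (a counter with value $0$ monitors no item), maintaining the items mapped to that cell by the row hash function $h_i$. Property (i) ("1-norm equivalence") says the counters in a cell sum to the same value a Count--Min sketch counter for that cell would hold. *)

theory Defs
  imports Complex_Main
begin

type_synonym 'a stream = "('a \<times> real) list"

type_synonym 'a summary = "'a set \<times> ('a \<Rightarrow> real)"

definition pos_weights :: "'a stream \<Rightarrow> bool" where
  "pos_weights \<tau> \<longleftrightarrow> (\<forall>occ \<in> set \<tau>. snd occ > 0)"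

definition cell_stream :: "(nat \<Rightarrow> 'a \<Rightarrow> nat) \<Rightarrow> 'a stream \<Rightarrow> nat \<Rightarrow> nat \<Rightarrow> 'a stream" where
  "cell_stream h \<tau> i j = filter (\<lambda>occ. h i (fst occ) = j) \<tau>"

definition freq :: "'a stream \<Rightarrow> 'a \<Rightarrow> real" where
  "freq \<tau> e = sum_list (map snd (filter (\<lambda>occ. fst occ = e) \<tau>))"

definition total :: "'a stream \<Rightarrow> real" where
  "total \<tau> = sum_list (map snd \<tau>)"

definition two_counter :: "'a summary \<Rightarrow> bool" where
  "two_counter S \<longleftrightarrow> finite (fst S) \<and> card (fst S) \<le> 2 \<and> (\<forall>e \<in> fst S. snd S e > 0)"

definition fmin :: "'a summary \<Rightarrow> real" where
  "fmin S = (if card (fst S) = 2 then Min (snd S ` fst S) else 0)"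

definition snorm :: "'a summary \<Rightarrow> real" where
  "snorm S = (\<Sum>e \<in> fst S. snd S e)"

definition valid :: "'a summary \<Rightarrow> 'a stream \<Rightarrow> bool" where
  "valid S \<tau> \<longleftrightarrow>
     snorm S = total \<tau> \<and>
     (\<forall>e \<in> fst S. snd S e - fmin S \<le> freq \<tau> e \<and> freq \<tau> e \<le> snd S e) \<and>
     (\<forall>e. e \<notin> fst S \<longrightarrow> freq \<tau> e \<le> fmin S) \<and>
     fmin S \<le> total \<tau> / 2"

definition combine :: "'a summary \<Rightarrow> 'a summary \<Rightarrow> 'a summary" where
  "combine S1 S2 = (fst S1 \<union> fst S2,
     (\<lambda>e. if e \<in> fst S1 \<and> e \<in> fst S2 then snd S1 e + snd S2 e
          else if e \<in> fst S1 then snd S1 e + fmin S2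
          else if e \<in> fst S2 then snd S2 e + fmin S1
          else 0))"

text \<open>Estimates outside the monitored set
  are irrelevant and not constrained.\<close>
definition is_merge :: "'a summary \<Rightarrow> 'a summary \<Rightarrow> 'a summary \<Rightarrow> bool" where
  "is_merge S1 S2 SM \<longleftrightarrow>
    (let SC = combine S1 S2 in
     if card (fst SC) > 2 then
       fst SM \<subseteq> fst SC \<and> card (fst SM) = 2 \<and>
       (\<forall>x \<in> fst SM. \<forall>y \<in> fst SC - fst SM. snd SC y \<le> snd SC x) \<and>
       (\<forall>e \<in> fst SM. snd SM e = snd SC e)
     else
       fst SM = fst SC \<and> (\<forall>e \<in> fst SM. snd SM e = snd SC e))"

end

theory Submission
  imports Defs
begin

text \<open>Write m for the sum of the two minimum counters. Every combined estimate is at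
  least m and overestimates the frequency in the concatenated stream by at most m, while
  an unmonitored item occurs at most m times; so validity follows once the kept counters
  have minimum at least m and every dropped counter is at most that minimum.

  For the norm: an item missing from one summary is charged that summary's minimum, which
  is nonzero only if the summary is full, so the combined norm exceeds the true total by
  exactly (|\<Sigma>_C| - 2) m. A summary has at most one counter above its minimum, hence
  at most two combined estimates exceed m, and the |\<Sigma>_C| - 2 counters dropped by the
  merge are all equal to m: discarding them restores the norm.\<close>

lemma freq_append: "freq (\<tau>1 @ \<tau>2) e = freq \<tau>1 e + freq \<tau>2 e"
  by (simp add: freq_def)

lemma total_append: "total (\<tau>1 @ \<tau>2) = total \<tau>1 + total \<tau>2"
  by (simp add: total_def)

lemma freq_nonneg: "pos_weights \<tau> \<Longrightarrow> 0 \<le> freq \<tau> e"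
  unfolding freq_def pos_weights_def by (rule sum_list_nonneg) auto

lemma pos_weights_cell_stream: "pos_weights \<tau> \<Longrightarrow> pos_weights (cell_stream h \<tau> i j)"
  by (auto simp: pos_weights_def cell_stream_def)

lemma cell_stream_append:
  "cell_stream h (\<tau>1 @ \<tau>2) i j = cell_stream h \<tau>1 i j @ cell_stream h \<tau>2 i j"
  by (simp add: cell_stream_def)

lemma fmin_doubleton: "x \<noteq> y \<Longrightarrow> fmin ({x, y}, f) = min (f x) (f y)"
  by (simp add: fmin_def)

lemma fmin_cong: "(\<And>e. e \<in> A \<Longrightarrow> f e = g e) \<Longrightarrow> fmin (A, f) = fmin (A, g)"
  by (simp add: fmin_def cong: image_cong)

lemma snorm_cong: "(\<And>e. e \<in> A \<Longrightarrow> f e = g e) \<Longrightarrow> snorm (A, f) = snorm (A, g)"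
  by (simp add: snorm_def)

lemma two_counter_cong:
  "(\<And>e. e \<in> A \<Longrightarrow> f e = g e) \<Longrightarrow> two_counter (A, f) = two_counter (A, g)"
  by (simp add: two_counter_def)

lemma valid_cong: "(\<And>e. e \<in> A \<Longrightarrow> f e = g e) \<Longrightarrow> valid (A, f) \<tau> = valid (A, g) \<tau>"
  by (simp add: valid_def fmin_cong[of A f g] snorm_cong[of A f g])

lemma valid_freq_bounds:
  "valid (A, f) \<tau> \<Longrightarrow> e \<in> A \<Longrightarrow> f e - fmin (A, f) \<le> freq \<tau> e \<and> freq \<tau> e \<le> f e"
  by (simp add: valid_def)

lemma valid_freq_outside: "valid (A, f) \<tau> \<Longrightarrow> e \<notin> A \<Longrightarrow> freq \<tau> e \<le> fmin (A, f)"
  by (simp add: valid_def)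

lemma two_counter_cases:
  assumes "two_counter (A, f)"
  obtains x y where "x \<noteq> y" "A = {x, y}" | "card A < 2"
  using assms by (force simp: two_counter_def card_2_iff le_less)

lemma fmin_nonneg:
  assumes "two_counter (A, f)" shows "0 \<le> fmin (A, f)"
  using assms by (cases rule: two_counter_cases[OF assms])
    (auto simp: fmin_def two_counter_def less_imp_le)

lemma fmin_le:
  assumes "two_counter (A, f)" "e \<in> A" shows "fmin (A, f) \<le> f e"
  using assms by (cases rule: two_counter_cases[OF assms(1)])
    (auto simp: fmin_def two_counter_def less_imp_le)

lemma two_fmin_le_snorm:
  assumes "two_counter (A, f)" shows "2 * fmin (A, f) \<le> snorm (A, f)"
  using assms by (cases rule: two_counter_cases[OF assms])
    (auto simp: fmin_def snorm_def two_counter_def intro: sum_nonneg less_imp_le)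

lemma card_above_fmin_le_1:
  assumes "two_counter (A, f)" shows "card {e \<in> A. fmin (A, f) < f e} \<le> 1"
proof (cases rule: two_counter_cases[OF assms])
  case (1 x y)
  then have "{e \<in> A. fmin (A, f) < f e} \<subseteq> {x} \<or> {e \<in> A. fmin (A, f) < f e} \<subseteq> {y}"
    by (auto simp: fmin_doubleton min_def)
  then show ?thesis
    using card_mono[of "{x}"] card_mono[of "{y}"] by fastforce
next
  case 2
  moreover have "card {e \<in> A. fmin (A, f) < f e} \<le> card A"
    using assms by (intro card_mono) (auto simp: two_counter_def)
  ultimately show ?thesis by simp
qed

lemma card_diff_mult_fmin:
  assumes "finite A" "two_counter (B, f)"
  shows "real (card (A - B)) * fmin (B, f) = real (card (A \<union> B) - 2) * fmin (B, f)"
proof (cases "card B = 2")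
  case True
  have "finite B" using assms(2) by (simp add: two_counter_def)
  then have "card (A \<union> B) = card (A - B) + card B"
    by (metis Un_Diff_cancel2 card_Un_disjoint Diff_disjoint assms(1) finite_Diff Int_commute)
  then show ?thesis using True by simp
qed (simp add: fmin_def)

lemma dropped_eq_min:
  fixes f :: "'a \<Rightarrow> 'b::linorder"
  assumes "finite C" "M \<subseteq> C" and top: "\<forall>x \<in> M. \<forall>y \<in> C - M. f y \<le> f x"
    and ge: "\<forall>e \<in> C. m \<le> f e" and count: "card (C - M) \<le> card {e \<in> C. f e = m}"
    and e: "e \<in> C - M"
  shows "f e = m"
proof (rule ccontr)
  assume "f e \<noteq> m"
  with ge e have "m < f e" by (auto simp: order.order_iff_strict)
  with top e have "{z \<in> C. f z = m} \<subseteq> C - M - {e}"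
    by (auto simp: not_le[symmetric])
  then have "card {z \<in> C. f z = m} \<le> card (C - M - {e})"
    using assms(1) by (intro card_mono) auto
  also have "\<dots> < card (C - M)"
    using assms(1) e by (intro card_Diff1_less) auto
  finally show False using count by simp
qed

lemma fst_combine [simp]: "fst (combine S1 S2) = fst S1 \<union> fst S2"
  by (simp add: combine_def)

locale two_summaries =
  fixes A B :: "'a set" and f1 f2 :: "'a \<Rightarrow> real"
  assumes two_counter_1: "two_counter (A, f1)" and two_counter_2: "two_counter (B, f2)"
begin

abbreviation fc :: "'a \<Rightarrow> real" where
  "fc \<equiv> snd (combine (A, f1) (B, f2))"

abbreviation m :: real where
  "m \<equiv> fmin (A, f1) + fmin (B, f2)"

lemma finite_A: "finite A" and finite_B: "finite B"
  using two_counter_1 two_counter_2 by (simp_all add: two_counter_def)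

lemma fmin_le_combine: "e \<in> A \<union> B \<Longrightarrow> m \<le> fc e"
  using fmin_le[OF two_counter_1] fmin_le[OF two_counter_2]
    fmin_nonneg[OF two_counter_1] fmin_nonneg[OF two_counter_2]
  by (auto simp: combine_def intro: add_mono)

lemma combine_pos: "e \<in> A \<union> B \<Longrightarrow> 0 < fc e"
  using two_counter_1 two_counter_2
    fmin_nonneg[OF two_counter_1] fmin_nonneg[OF two_counter_2]
  by (auto simp: combine_def two_counter_def add_pos_pos add_pos_nonneg)

lemma snorm_combine:
  "snorm (combine (A, f1) (B, f2))
     = snorm (A, f1) + snorm (B, f2) + real (card (A \<union> B) - 2) * m"
proof -
  have "snorm (combine (A, f1) (B, f2)) = sum fc ((A \<inter> B) \<union> (A - B) \<union> (B - A))"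
    by (simp add: snorm_def combine_def Un_Diff_Int Un_commute Un_left_commute)
  also have "\<dots> = sum fc (A \<inter> B) + sum fc (A - B) + sum fc (B - A)"
    using finite_A finite_B by (subst sum.union_disjoint; auto)+
  also have "\<dots> = (sum f1 (A \<inter> B) + sum f2 (A \<inter> B))
      + (sum f1 (A - B) + real (card (A - B)) * fmin (B, f2))
      + (sum f2 (B - A) + real (card (B - A)) * fmin (A, f1))"
    by (simp add: combine_def sum.distrib)
  also have "\<dots> = snorm (A, f1) + snorm (B, f2)
      + (real (card (A - B)) * fmin (B, f2) + real (card (B - A)) * fmin (A, f1))"
    using sum.Int_Diff[OF finite_A, of f1 B] sum.Int_Diff[OF finite_B, of f2 A]
    by (simp add: snorm_def Int_commute)
  also have "\<dots> = snorm (A, f1) + snorm (B, f2) + real (card (A \<union> B) - 2) * m"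
    unfolding card_diff_mult_fmin[OF finite_A two_counter_2]
      card_diff_mult_fmin[OF finite_B two_counter_1, unfolded Un_commute[of B A]]
    by (simp add: distrib_left)
  finally show ?thesis .
qed

lemma card_combine_above_fmin: "card {e \<in> A \<union> B. m < fc e} \<le> 2"
proof -
  let ?N1 = "{e \<in> A. fmin (A, f1) < f1 e}" and ?N2 = "{e \<in> B. fmin (B, f2) < f2 e}"
  have "{e \<in> A \<union> B. m < fc e} \<subseteq> ?N1 \<union> ?N2"
    by (auto simp: combine_def)
  then have "card {e \<in> A \<union> B. m < fc e} \<le> card (?N1 \<union> ?N2)"
    using finite_A finite_B by (intro card_mono) auto
  then show ?thesis
    using card_Un_le[of ?N1 ?N2] card_above_fmin_le_1[OF two_counter_1]
      card_above_fmin_le_1[OF two_counter_2]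
    by linarith
qed

lemma card_combine_eq_fmin_ge: "card (A \<union> B) - 2 \<le> card {e \<in> A \<union> B. fc e = m}"
proof -
  let ?N = "{e \<in> A \<union> B. m < fc e}"
  have "{e \<in> A \<union> B. fc e = m} = (A \<union> B) - ?N"
    using fmin_le_combine by fastforce
  moreover have "card ((A \<union> B) - ?N) = card (A \<union> B) - card ?N"
    using finite_A finite_B by (intro card_Diff_subset) auto
  ultimately show ?thesis
    using card_combine_above_fmin by simp
qed

context
  fixes M :: "'a set" and g :: "'a \<Rightarrow> real"
  assumes merge: "is_merge (A, f1) (B, f2) (M, g)"
begin

lemma merge_estimates: "e \<in> M \<Longrightarrow> g e = fc e"
  using merge by (auto simp: is_merge_def Let_def split: if_splits)

lemma merge_subset: "M \<subseteq> A \<union> B"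
  using merge by (auto simp: is_merge_def Let_def split: if_splits)

lemma merge_cases:
  obtains "card (A \<union> B) \<le> 2" "M = A \<union> B"
  | "2 < card (A \<union> B)" "M \<subseteq> A \<union> B" "card M = 2"
    "\<forall>x \<in> M. \<forall>y \<in> A \<union> B - M. fc y \<le> fc x"
  using merge by (auto simp: is_merge_def Let_def split: if_splits)

lemma two_counter_merge: "two_counter (M, fc)"
  by (rule merge_cases)
    (use finite_A finite_B combine_pos in \<open>auto simp: two_counter_def intro: finite_subset\<close>)

lemma fmin_le_merge: "m \<le> fmin (M, fc)"
proof (cases "card M = 2")
  case True
  then obtain x y where "x \<noteq> y" "M = {x, y}" by (auto simp: card_2_iff)
  then show ?thesis using merge_subset fmin_le_combine by (simp add: fmin_doubleton)
next
  case False
  have "card (A \<union> B) < 2 \<and> M = A \<union> B"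
    by (rule merge_cases) (use False in auto)
  then have "card A \<noteq> 2" "card B \<noteq> 2"
    using card_mono[of "A \<union> B" A] card_mono[of "A \<union> B" B] finite_A finite_B by auto
  then show ?thesis using False by (simp add: fmin_def)
qed

lemma dropped_le_fmin_merge: "e \<in> A \<union> B - M \<Longrightarrow> fc e \<le> fmin (M, fc)"
proof (rule merge_cases)
  assume "e \<in> A \<union> B - M" "card M = 2" "\<forall>x \<in> M. \<forall>y \<in> A \<union> B - M. fc y \<le> fc x"
  then show ?thesis by (auto simp: card_2_iff fmin_doubleton)
qed auto

lemma snorm_merge: "snorm (M, fc) = snorm (A, f1) + snorm (B, f2)"
proof (rule merge_cases)
  assume "card (A \<union> B) \<le> 2" "M = A \<union> B"
  then show ?thesis using snorm_combine by (simp add: snorm_def combine_def)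
next
  assume sub: "M \<subseteq> A \<union> B" and card_M: "card M = 2"
    and top: "\<forall>x \<in> M. \<forall>y \<in> A \<union> B - M. fc y \<le> fc x"
  have fin: "finite (A \<union> B)" using finite_A finite_B by simp
  have card_dropped: "card (A \<union> B - M) = card (A \<union> B) - 2"
    using card_Diff_subset[OF finite_subset[OF sub fin] sub] card_M by simp
  have "fc e = m" if "e \<in> A \<union> B - M" for e
    using dropped_eq_min[OF fin sub top _ _ that] fmin_le_combine card_combine_eq_fmin_ge
    by (simp add: card_dropped)
  then have "sum fc (A \<union> B - M) = real (card (A \<union> B) - 2) * m"
    by (simp add: card_dropped)
  moreover have "sum fc (A \<union> B) = sum fc M + sum fc (A \<union> B - M)"
    using sum.subset_diff[OF sub fin] by (simp add: add.commute)
  ultimately show ?thesis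
    using snorm_combine by (simp add: snorm_def combine_def)
qed

end

context
  fixes \<tau>1 \<tau>2 :: "'a stream"
  assumes valid_1: "valid (A, f1) \<tau>1" and valid_2: "valid (B, f2) \<tau>2"
    and pos_1: "pos_weights \<tau>1" and pos_2: "pos_weights \<tau>2"
begin

lemma freq_combine_bounds:
  assumes "e \<in> A \<union> B"
  shows "fc e - m \<le> freq (\<tau>1 @ \<tau>2) e" "freq (\<tau>1 @ \<tau>2) e \<le> fc e"
  using assms freq_nonneg[OF pos_1, of e] freq_nonneg[OF pos_2, of e]
    valid_freq_bounds[OF valid_1, of e] valid_freq_bounds[OF valid_2, of e]
    valid_freq_outside[OF valid_1, of e] valid_freq_outside[OF valid_2, of e]
  by (auto simp: combine_def freq_append)

lemma freq_le_fmin_outside_combine: "e \<notin> A \<union> B \<Longrightarrow> freq (\<tau>1 @ \<tau>2) e \<le> m"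
  using valid_freq_outside[OF valid_1, of e] valid_freq_outside[OF valid_2, of e]
  by (simp add: freq_append)

lemma valid_merge:
  assumes merge: "is_merge (A, f1) (B, f2) (M, g)"
  shows "two_counter (M, g) \<and> valid (M, g) (\<tau>1 @ \<tau>2)"
proof -
  note estimates = merge_estimates[OF merge]
  have total: "snorm (M, fc) = total (\<tau>1 @ \<tau>2)"
    using snorm_merge[OF merge] valid_1 valid_2 by (simp add: valid_def total_append)
  have fmin: "m \<le> fmin (M, fc)"
    by (rule fmin_le_merge[OF merge])
  have "valid (M, fc) (\<tau>1 @ \<tau>2)"
    unfolding valid_def fst_conv snd_conv
  proof (intro conjI ballI allI impI)
    show "snorm (M, fc) = total (\<tau>1 @ \<tau>2)" by (rule total)
    show "fmin (M, fc) \<le> total (\<tau>1 @ \<tau>2) / 2"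
      using two_fmin_le_snorm[OF two_counter_merge[OF merge]] total by simp
  next
    fix e assume "e \<in> M"
    then show "fc e - fmin (M, fc) \<le> freq (\<tau>1 @ \<tau>2) e" "freq (\<tau>1 @ \<tau>2) e \<le> fc e"
      using merge_subset[OF merge] freq_combine_bounds[of e] fmin by auto
  next
    fix e assume "e \<notin> M"
    then show "freq (\<tau>1 @ \<tau>2) e \<le> fmin (M, fc)"
      using freq_combine_bounds(2)[of e] dropped_le_fmin_merge[OF merge, of e]
        freq_le_fmin_outside_combine[of e] fmin
      by (cases "e \<in> A \<union> B") auto
  qed
  then show ?thesis
    using two_counter_merge[OF merge] two_counter_cong[of M g fc] valid_cong[of M g fc]
      estimates by simp
qed

end

end

theorem theorem3:
  fixes d w :: nat
    and h :: "nat \<Rightarrow> 'a \<Rightarrow> nat"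
    and \<sigma>1 \<sigma>2 :: "'a stream"
    and D1 D2 G :: "nat \<Rightarrow> nat \<Rightarrow> 'a summary"
  assumes "d \<ge> 1" and "w \<ge> 1"
    and "\<And>i e. i \<in> {1..d} \<Longrightarrow> h i e \<in> {1..w}"
    and "pos_weights \<sigma>1" and "pos_weights \<sigma>2"
    and "\<And>i j. i \<in> {1..d} \<Longrightarrow> j \<in> {1..w} \<Longrightarrow>
           two_counter (D1 i j) \<and> valid (D1 i j) (cell_stream h \<sigma>1 i j)"
    and "\<And>i j. i \<in> {1..d} \<Longrightarrow> j \<in> {1..w} \<Longrightarrow>
           two_counter (D2 i j) \<and> valid (D2 i j) (cell_stream h \<sigma>2 i j)"
    and "\<And>i j. i \<in> {1..d} \<Longrightarrow> j \<in> {1..w} \<Longrightarrow> is_merge (D1 i j) (D2 i j) (G i j)"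
  shows "\<forall>i \<in> {1..d}. \<forall>j \<in> {1..w}.
           two_counter (G i j) \<and> valid (G i j) (cell_stream h (\<sigma>1 @ \<sigma>2) i j) \<and>
           snorm (G i j) = total (cell_stream h (\<sigma>1 @ \<sigma>2) i j) \<and>
           total (cell_stream h (\<sigma>1 @ \<sigma>2) i j) =
             total (cell_stream h \<sigma>1 i j) + total (cell_stream h \<sigma>2 i j)"
proof (intro ballI)
  fix i j assume ij: "i \<in> {1..d}" "j \<in> {1..w}"
  obtain A f1 where D1: "D1 i j = (A, f1)" by fastforce
  obtain B f2 where D2: "D2 i j = (B, f2)" by fastforce
  obtain M g where G: "G i j = (M, g)" by fastforce
  interpret two_summaries A B f1 f2
    using assms(6,7)[OF ij] D1 D2 by unfold_locales simp_all
  have "two_counter (M, g) \<and> valid (M, g) (cell_stream h \<sigma>1 i j @ cell_stream h \<sigma>2 i j)"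
    using assms(6-8)[OF ij] D1 D2 G
    by (intro valid_merge pos_weights_cell_stream assms(4,5)) simp_all
  then show "two_counter (G i j) \<and> valid (G i j) (cell_stream h (\<sigma>1 @ \<sigma>2) i j) \<and>
      snorm (G i j) = total (cell_stream h (\<sigma>1 @ \<sigma>2) i j) \<and>
      total (cell_stream h (\<sigma>1 @ \<sigma>2) i j) =
        total (cell_stream h \<sigma>1 i j) + total (cell_stream h \<sigma>2 i j)"
    using G by (simp add: cell_stream_append total_append valid_def)
qed

end
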